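(* Let $(X,d_X,\mu_X)$ be a finite metric measure space, $X=\{x_1,\dots,x_n\}$, with $\mu_X(x_i)>0$ for all $i$, and let $1\le k\le n$. Then for all $i,j$, \[ E_{X,k}(x_i,x_j)=|d_X(x_i,x_j)-[\Phi_k(x_i),\Phi_k(x_j)]|\le\frac{|\lambda_{k+1}|}{\sqrt{\mu_X(x_i)\mu_X(x_j)}}. \]
   Context: The distance kernel operator of the finite space is the matrix $D_{ij}=d_X(x_i,x_j)\mu_X(x_j)$, self-adjoint for the inner product $\langle v,w\rangle_Q=\sum_i v_iw_i\mu_X(x_i)$. It has real eigenvalues $\lambda_1,\dots,\lambda_n$ ordered by decreasing absolute value (assumed of multiplicity one) and a $Q$-orthonormal basis of real eigenvectors $e_1,\dots,e_n$; set $\lambda_{n+1}:=0$. The distance kernel embedding is $\Phi_k(x_j)=(\sqrt{\lambda_1}(e_1)_j,\dots,\sqrt{\lambda_k}(e_k)_j)\in\mathbb{C}^k$, the square root of a negative number taken with positive imaginary part. For $v,w\in\mathbb{C}^k$, $[v,w]=\sum_{l=1}^k v_lw_l$. *)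

theory Defs
  imports Complex_Main
begin

text \<open>A finite metric measure space X = {x_0,...,x_{n-1}} is encoded by indices
  0..<n, a distance d :: nat => nat => real and point masses mu :: nat => real.\<close>

definition finite_metric :: "nat \<Rightarrow> (nat \<Rightarrow> nat \<Rightarrow> real) \<Rightarrow> bool" where
  "finite_metric n d \<longleftrightarrow>
     (\<forall>i<n. \<forall>j<n. d i j \<ge> 0 \<and> (d i j = 0 \<longleftrightarrow> i = j) \<and> d i j = d j i) \<and>
     (\<forall>i<n. \<forall>j<n. \<forall>l<n. d i l \<le> d i j + d j l)"

definition dist_kernel_apply :: "nat \<Rightarrow> (nat \<Rightarrow> nat \<Rightarrow> real) \<Rightarrow> (nat \<Rightarrow> real) \<Rightarrow> (nat \<Rightarrow> real) \<Rightarrow> nat \<Rightarrow> real" where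
  "dist_kernel_apply n d mu v i = (\<Sum>j<n. d i j * mu j * v j)"

definition Q_inner :: "nat \<Rightarrow> (nat \<Rightarrow> real) \<Rightarrow> (nat \<Rightarrow> real) \<Rightarrow> (nat \<Rightarrow> real) \<Rightarrow> real" where
  "Q_inner n mu v w = (\<Sum>i<n. v i * w i * mu i)"

definition dk_eigensystem :: "nat \<Rightarrow> (nat \<Rightarrow> nat \<Rightarrow> real) \<Rightarrow> (nat \<Rightarrow> real) \<Rightarrow> (nat \<Rightarrow> real) \<Rightarrow> (nat \<Rightarrow> nat \<Rightarrow> real) \<Rightarrow> bool" where
  "dk_eigensystem n d mu lam e \<longleftrightarrow>
     (\<forall>l<n. \<forall>i<n. dist_kernel_apply n d mu (e l) i = lam l * e l i) \<and>
     (\<forall>l<n. \<forall>m<n. Q_inner n mu (e l) (e m) = (if l = m then 1 else 0)) \<and>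
     (\<forall>l m. l \<le> m \<longrightarrow> m < n \<longrightarrow> \<bar>lam m\<bar> \<le> \<bar>lam l\<bar>) \<and>
     inj_on lam {..<n}"

text \<open>lambda_{k+1} in the paper's 1-indexing, with lambda_{n+1} = 0.\<close>
definition lam_ext :: "nat \<Rightarrow> (nat \<Rightarrow> real) \<Rightarrow> nat \<Rightarrow> real" where
  "lam_ext n lam l = (if l < n then lam l else 0)"

text \<open>Distance kernel embedding Phi_k(x_j) in C^k: component l (l < k) is
  sqrt(lambda_l) (e_l)_j, csqrt of a negative number having positive imaginary part.\<close>
definition dk_embedding :: "(nat \<Rightarrow> real) \<Rightarrow> (nat \<Rightarrow> nat \<Rightarrow> real) \<Rightarrow> nat \<Rightarrow> nat \<Rightarrow> complex" where
  "dk_embedding lam e j l = csqrt (complex_of_real (lam l)) * complex_of_real (e l j)"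

definition bil_pair :: "nat \<Rightarrow> (nat \<Rightarrow> complex) \<Rightarrow> (nat \<Rightarrow> complex) \<Rightarrow> complex" where
  "bil_pair k v w = (\<Sum>l<k. v l * w l)"

end

theory Submission
  imports Defs "Jordan_Normal_Form.Determinant" "HOL-Analysis.L2_Norm"
begin

text \<open>The eigenvectors diagonalise the kernel: the matrix with rows e l scaled by sqrt mu
  is orthogonal, so its columns are orthonormal as well (completeness), and expanding the
  standard basis in the eigenbasis gives the spectral expansion
  d(x_i, x_j) = \<Sum>l<n. lam l * e l i * e l j.  The pairing of the embeddings is the
  truncation of this sum at k, so the error is the tail over l \<ge> k, whose eigenvalues are
  bounded by |lam k|; Cauchy-Schwarz and completeness bound the remaining factor by
  1 / sqrt (mu i * mu j).\<close>

lemma Q_orthonormal_completeness: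
  fixes mu :: "nat \<Rightarrow> real" and e :: "nat \<Rightarrow> nat \<Rightarrow> real"
  assumes orth: "\<forall>l<n. \<forall>m<n. Q_inner n mu (e l) (e m) = (if l = m then 1 else 0)"
    and pos: "\<forall>i<n. mu i > 0" and i: "i < n" and j: "j < n"
  shows "(\<Sum>l<n. e l i * e l j) = (if i = j then 1 / mu i else 0)"
proof -
  define A :: "real mat" where "A = mat n n (\<lambda>(l, i). e l i * sqrt (mu i))"
  have A: "A \<in> carrier_mat n n" and AT: "A\<^sup>T \<in> carrier_mat n n" by (auto simp: A_def)
  have "A * A\<^sup>T = 1\<^sub>m n"
  proof (rule eq_matI)
    fix l m assume "l < dim_row (1\<^sub>m n :: real mat)" and "m < dim_col (1\<^sub>m n :: real mat)"
    then have l: "l < n" and m: "m < n" by auto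
    have "(A * A\<^sup>T) $$ (l, m) = (\<Sum>i<n. e l i * sqrt (mu i) * (e m i * sqrt (mu i)))"
      using l m by (auto simp: A_def scalar_prod_def lessThan_atLeast0 intro!: sum.cong)
    also have "\<dots> = Q_inner n mu (e l) (e m)"
      unfolding Q_inner_def by (rule sum.cong) (use pos in auto)
    finally show "(A * A\<^sup>T) $$ (l, m) = 1\<^sub>m n $$ (l, m)" using orth l m by simp
  qed (auto simp: A_def)
  then have "A\<^sup>T * A = 1\<^sub>m n" using mat_mult_left_right_inverse[OF A AT] by blast
  moreover have "(A\<^sup>T * A) $$ (i, j) = (\<Sum>l<n. e l i * sqrt (mu i) * (e l j * sqrt (mu j)))"
    using i j by (auto simp: A_def scalar_prod_def lessThan_atLeast0 intro!: sum.cong)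
  moreover have "\<dots> = (\<Sum>l<n. e l i * e l j) * (sqrt (mu i) * sqrt (mu j))"
    by (subst sum_distrib_right) (simp add: mult_ac)
  ultimately have "(\<Sum>l<n. e l i * e l j) * (sqrt (mu i) * sqrt (mu j)) = (if i = j then 1 else 0)"
    using i j by simp
  moreover have "mu i > 0" "mu j > 0" using pos i j by auto
  ultimately show ?thesis by (cases "i = j") (simp_all add: field_simps)
qed

lemma L2_set_eigenvector_column:
  assumes "\<forall>l<n. \<forall>m<n. Q_inner n mu (e l) (e m) = (if l = m then 1 else 0)"
    and "\<forall>i<n. mu i > 0" and "i < n"
  shows "L2_set (\<lambda>l. e l i) {..<n} = 1 / sqrt (mu i)"
  using Q_orthonormal_completeness[OF assms assms(3)]
  by (simp add: L2_set_def power2_eq_square real_sqrt_divide)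

lemma dist_kernel_spectral_expansion:
  assumes eig: "\<forall>l<n. \<forall>i<n. dist_kernel_apply n d mu (e l) i = lam l * e l i"
    and orth: "\<forall>l<n. \<forall>m<n. Q_inner n mu (e l) (e m) = (if l = m then 1 else 0)"
    and pos: "\<forall>i<n. mu i > 0" and i: "i < n" and j: "j < n"
  shows "d i j = (\<Sum>l<n. lam l * e l i * e l j)"
proof -
  have "(\<Sum>l<n. lam l * e l i * e l j) = (\<Sum>l<n. (\<Sum>m<n. d i m * mu m * e l m) * e l j)"
    using eig i by (simp add: dist_kernel_apply_def)
  also have "\<dots> = (\<Sum>l<n. \<Sum>m<n. d i m * mu m * (e l m * e l j))"
    by (simp add: sum_distrib_right mult.assoc)
  also have "\<dots> = (\<Sum>m<n. d i m * mu m * (\<Sum>l<n. e l m * e l j))"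
    by (subst sum.swap) (simp add: sum_distrib_left)
  also have "\<dots> = (\<Sum>m<n. d i m * mu m * (if m = j then 1 / mu m else 0))"
    using Q_orthonormal_completeness[OF orth pos _ j] by simp
  also have "\<dots> = d i j * mu j * (1 / mu j)"
    using j by (simp add: if_distrib sum.delta cong: if_cong)
  also have "\<dots> = d i j"
    using pos j by (simp add: less_imp_neq[THEN not_sym])
  finally show ?thesis by simp
qed

lemma bil_pair_dk_embedding:
  "bil_pair k (dk_embedding lam e i) (dk_embedding lam e j)
     = complex_of_real (\<Sum>l<k. lam l * e l i * e l j)"
proof -
  have "dk_embedding lam e i l * dk_embedding lam e j l
      = csqrt (complex_of_real (lam l)) ^ 2 * complex_of_real (e l i * e l j)" for l
    by (simp add: dk_embedding_def power2_eq_square mult_ac)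
  then show ?thesis by (simp add: bil_pair_def mult.assoc)
qed

lemma abs_spectral_tail_le:
  fixes lam :: "nat \<Rightarrow> real" and e :: "nat \<Rightarrow> nat \<Rightarrow> real"
  assumes "\<And>l. l \<in> A \<Longrightarrow> \<bar>lam l\<bar> \<le> c"
  shows "\<bar>\<Sum>l\<in>A. lam l * e l i * e l j\<bar> \<le> c * (L2_set (\<lambda>l. e l i) A * L2_set (\<lambda>l. e l j) A)"
proof (cases "A = {}")
  case False
  then have "c \<ge> 0" using assms by force
  have "\<bar>\<Sum>l\<in>A. lam l * e l i * e l j\<bar> \<le> (\<Sum>l\<in>A. \<bar>lam l\<bar> * (\<bar>e l i\<bar> * \<bar>e l j\<bar>))"
    by (rule order_trans[OF sum_abs]) (simp add: abs_mult mult.assoc)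
  also have "\<dots> \<le> (\<Sum>l\<in>A. c * (\<bar>e l i\<bar> * \<bar>e l j\<bar>))"
    using assms by (intro sum_mono mult_right_mono) auto
  also have "\<dots> = c * (\<Sum>l\<in>A. \<bar>e l i\<bar> * \<bar>e l j\<bar>)"
    by (simp add: sum_distrib_left)
  also have "\<dots> \<le> c * (L2_set (\<lambda>l. e l i) A * L2_set (\<lambda>l. e l j) A)"
    using L2_set_mult_ineq \<open>c \<ge> 0\<close> by (rule mult_left_mono)
  finally show ?thesis .
qed simp

lemma L2_set_subset_le:
  assumes "finite B" and "A \<subseteq> B"
  shows "L2_set f A \<le> L2_set f B"
  unfolding L2_set_def using assms by (intro real_sqrt_le_mono sum_mono2) auto

theorem proposition6p14:
  fixes n k :: nat and d :: "nat \<Rightarrow> nat \<Rightarrow> real" and mu lam :: "nat \<Rightarrow> real"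
    and e :: "nat \<Rightarrow> nat \<Rightarrow> real" and i j :: nat
  assumes "finite_metric n d"
    and "\<forall>i<n. mu i > 0"
    and "dk_eigensystem n d mu lam e"
    and "1 \<le> k" and "k \<le> n"
    and "i < n" and "j < n"
  shows "cmod (complex_of_real (d i j)
            - bil_pair k (dk_embedding lam e i) (dk_embedding lam e j))
         \<le> \<bar>lam_ext n lam k\<bar> / sqrt (mu i * mu j)"
proof -
  note pos = assms(2) and i = assms(6) and j = assms(7)
  have eig: "\<forall>l<n. \<forall>i<n. dist_kernel_apply n d mu (e l) i = lam l * e l i"
    and orth: "\<forall>l<n. \<forall>m<n. Q_inner n mu (e l) (e m) = (if l = m then 1 else 0)"
    and ord: "\<forall>l m. l \<le> m \<longrightarrow> m < n \<longrightarrow> \<bar>lam m\<bar> \<le> \<bar>lam l\<bar>"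
    using assms(3) unfolding dk_eigensystem_def by auto
  let ?tail = "\<Sum>l\<in>{k..<n}. lam l * e l i * e l j"
  have "d i j = (\<Sum>l<k. lam l * e l i * e l j) + ?tail"
    using dist_kernel_spectral_expansion[OF eig orth pos i j] \<open>k \<le> n\<close>
    by (simp add: lessThan_atLeast0 sum.atLeastLessThan_concat)
  then have error: "cmod (complex_of_real (d i j)
      - bil_pair k (dk_embedding lam e i) (dk_embedding lam e j)) = \<bar>?tail\<bar>"
    by (simp add: bil_pair_dk_embedding del: of_real_sum)
  have "\<bar>?tail\<bar> \<le> \<bar>lam_ext n lam k\<bar>
      * (L2_set (\<lambda>l. e l i) {..<n} * L2_set (\<lambda>l. e l j) {..<n})"
  proof (cases "k < n")
    case True
    have "\<bar>?tail\<bar> \<le> \<bar>lam k\<bar> * (L2_set (\<lambda>l. e l i) {k..<n} * L2_set (\<lambda>l. e l j) {k..<n})"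
      using ord by (intro abs_spectral_tail_le) auto
    also have "\<dots> \<le> \<bar>lam k\<bar> * (L2_set (\<lambda>l. e l i) {..<n} * L2_set (\<lambda>l. e l j) {..<n})"
      by (intro mult_left_mono mult_mono L2_set_subset_le) auto
    finally show ?thesis using True by (simp add: lam_ext_def)
  qed (use \<open>k \<le> n\<close> in simp)
  also have "\<dots> = \<bar>lam_ext n lam k\<bar> / sqrt (mu i * mu j)"
    by (simp add: L2_set_eigenvector_column[OF orth pos i] L2_set_eigenvector_column[OF orth pos j]
        real_sqrt_mult)
  finally show ?thesis using error by simp
qed

end
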